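(* Let $\mathcal{L}$ be a family of oriented balanced algebraic laws over a signature $\Sigma$, let $\phi$ be an injective endomorphism of the geometry group $G_{\mathcal{L}}$, and let $\mathtt{Cc}:T_\Sigma(x)\to G_{\mathcal{L}}$ be a $\phi$-blueprint for $\mathcal{L}$. Then for all words $w,w'\in\mathcal{W}_{\mathcal{L}}$, if $\mathit{eval}(w)\sim\mathit{eval}(w')$ then $\mathtt{eval}(w)=\mathtt{eval}(w')$ in $G_{\mathcal{L}}$.
   Context: $T_\Sigma(x)$: terms in the single variable $x$ over $\Sigma$ (general terms use an infinite set of variables). A law is balanced if both sides contain the same variables. Addresses are finite sequences of positive integers, $t/\alpha$ the subterm at $\alpha$. For $L=(l,r)\in\mathcal{L}$ and an address $\alpha$, $O^+_{L,\alpha}$ is the partial map sending $t$ with $t/\alpha=l\sigma$ to the term obtained by replacing that subterm by $r\sigma$; $O^-_{L,\alpha}$ is its inverse. $\mathcal{W}_{\mathcal{L}}$ is the free monoid on the letters $O^{\pm}_{L,\alpha}$; $\mathit{eval}(w)$ is the partial map on terms obtained by applying the letters of $w$ left to right; $t\cdot f$ is the image of $t$ under $f$. For partial maps $f,g$ on terms, $f\sim g$ means there is at least one term $u$ on which both are defined and $u\cdot f=u\cdot g$. The geometry group $G_{\mathcal{L}}$ is the group presented by generators $g_{L,\alpha}$ and a set of relations $u=v$ between positive words (in the letters $O^+_{L,\alpha}$) that hold as equalities of partial maps (the confluence relations); $\mathtt{eval}:\mathcal{W}_{\mathcal{L}}\to G_{\mathcal{L}}$ sends $O^+_{L,\alpha}\mapsto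 g_{L,\alpha}$, $O^-_{L,\alpha}\mapsto g_{L,\alpha}^{-1}$. $\mathtt{Cc}$ is a $\phi$-blueprint if $\mathtt{Cc}(t\cdot\mathit{eval}(w))=\mathtt{Cc}(t)\cdot\phi(\mathtt{eval}(w))$ for all $t\in T_\Sigma(x)$ and $w\in\mathcal{W}_{\mathcal{L}}$ with $t\cdot\mathit{eval}(w)$ defined. *)

theory Defs
  imports "HOL-Algebra.Group"
begin

text \<open>A signature is a type of function symbols together with an arity map.\<close>

datatype ('f, 'v) trm = V 'v | F 'f "('f, 'v) trm list"

fun wf_trm :: "('f \<Rightarrow> nat) \<Rightarrow> ('f, 'v) trm \<Rightarrow> bool" where
  "wf_trm ar (V x) = True"
| "wf_trm ar (F f ts) = (length ts = ar f \<and> (\<forall>t\<in>set ts. wf_trm ar t))"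

fun vars :: "('f, 'v) trm \<Rightarrow> 'v set" where
  "vars (V x) = {x}"
| "vars (F f ts) = (\<Union>t\<in>set ts. vars t)"

fun subst :: "('v \<Rightarrow> ('f, 'w) trm) \<Rightarrow> ('f, 'v) trm \<Rightarrow> ('f, 'w) trm" where
  "subst \<sigma> (V x) = \<sigma> x"
| "subst \<sigma> (F f ts) = F f (map (subst \<sigma>) ts)"

text \<open>T_Sigma(x): terms in the single variable x (type unit of variables), well-formed.\<close>
definition one_var_terms :: "('f \<Rightarrow> nat) \<Rightarrow> ('f, unit) trm set" where
  "one_var_terms ar = {t. wf_trm ar t}"

type_synonym 'f law = "('f, nat) trm \<times> ('f, nat) trm"

definition balanced_law :: "('f \<Rightarrow> nat) \<Rightarrow> 'f law \<Rightarrow> bool" where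
  "balanced_law ar L = (wf_trm ar (fst L) \<and> wf_trm ar (snd L) \<and> vars (fst L) = vars (snd L))"

type_synonym addr = "nat list"

definition addresses :: "addr set" where
  "addresses = {\<alpha>. \<forall>i\<in>set \<alpha>. 0 < i}"

fun subterm_at :: "('f, 'v) trm \<Rightarrow> addr \<Rightarrow> ('f, 'v) trm option" where
  "subterm_at t [] = Some t"
| "subterm_at (V x) (i # \<alpha>) = None"
| "subterm_at (F f ts) (i # \<alpha>) =
     (if 1 \<le> i \<and> i \<le> length ts then subterm_at (ts ! (i - 1)) \<alpha> else None)"

fun replace_at :: "('f, 'v) trm \<Rightarrow> addr \<Rightarrow> ('f, 'v) trm \<Rightarrow> ('f, 'v) trm" where
  "replace_at t [] s = s"
| "replace_at (V x) (i # \<alpha>) s = V x"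
| "replace_at (F f ts) (i # \<alpha>) s = F f (ts[i - 1 := replace_at (ts ! (i - 1)) \<alpha> s])"

text \<open>O^+_{L,alpha}: replace t/alpha = l sigma by r sigma (for balanced L the result
  does not depend on the choice of sigma).\<close>
definition Opos :: "'f law \<Rightarrow> addr \<Rightarrow> ('f, unit) trm \<Rightarrow> ('f, unit) trm option" where
  "Opos L \<alpha> t =
     (case subterm_at t \<alpha> of
        None \<Rightarrow> None
      | Some s \<Rightarrow>
          (if \<exists>\<sigma>. subst \<sigma> (fst L) = s
           then Some (replace_at t \<alpha> (subst (SOME \<sigma>. subst \<sigma> (fst L) = s) (snd L)))
           else None))"

definition Oneg :: "'f law \<Rightarrow> addr \<Rightarrow> ('f, unit) trm \<Rightarrow> ('f, unit) trm option" where
  "Oneg L \<alpha> t = (if \<exists>!s. Opos L \<alpha> s = Some t then Some (THE s. Opos L \<alpha> s = Some t) else None)"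

text \<open>A letter (True, (L, alpha)) is O^+_{L,alpha}; (False, (L, alpha)) is O^-_{L,alpha}.\<close>
type_synonym 'f letter = "bool \<times> ('f law \<times> addr)"

definition generators :: "'f law set \<Rightarrow> ('f law \<times> addr) set" where
  "generators Ls = Ls \<times> addresses"

definition words :: "'f law set \<Rightarrow> 'f letter list set" where
  "words Ls = {w. \<forall>a\<in>set w. snd a \<in> generators Ls}"

fun apply_letter :: "'f letter \<Rightarrow> ('f, unit) trm \<Rightarrow> ('f, unit) trm option" where
  "apply_letter (b, (L, \<alpha>)) = (if b then Opos L \<alpha> else Oneg L \<alpha>)"

fun eval_word :: "'f letter list \<Rightarrow> ('f, unit) trm \<Rightarrow> ('f, unit) trm option" where
  "eval_word [] t = Some t"
| "eval_word (a # w) t = Option.bind (apply_letter a t) (eval_word w)"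

definition pm_sim :: "('f \<Rightarrow> nat) \<Rightarrow> (('f, unit) trm \<Rightarrow> ('f, unit) trm option)
    \<Rightarrow> (('f, unit) trm \<Rightarrow> ('f, unit) trm option) \<Rightarrow> bool" where
  "pm_sim ar f g = (\<exists>u\<in>one_var_terms ar. f u \<noteq> None \<and> g u \<noteq> None \<and> f u = g u)"

definition pos_word :: "('f law \<times> addr) list \<Rightarrow> 'f letter list" where
  "pos_word u = map (\<lambda>g. (True, g)) u"

inductive_set pres_cong :: "'f law set \<Rightarrow> (('f law \<times> addr) list \<times> ('f law \<times> addr) list) set
    \<Rightarrow> ('f letter list \<times> 'f letter list) set"
  for Ls R where
  refl: "w \<in> words Ls \<Longrightarrow> (w, w) \<in> pres_cong Ls R"
| sym: "(v, w) \<in> pres_cong Ls R \<Longrightarrow> (w, v) \<in> pres_cong Ls R"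
| trans: "(u, v) \<in> pres_cong Ls R \<Longrightarrow> (v, w) \<in> pres_cong Ls R \<Longrightarrow> (u, w) \<in> pres_cong Ls R"
| cancel: "xs \<in> words Ls \<Longrightarrow> ys \<in> words Ls \<Longrightarrow> g \<in> generators Ls \<Longrightarrow>
     (xs @ [(b, g), (\<not> b, g)] @ ys, xs @ ys) \<in> pres_cong Ls R"
| rel: "(u, v) \<in> R \<Longrightarrow> xs \<in> words Ls \<Longrightarrow> ys \<in> words Ls \<Longrightarrow>
     (xs @ pos_word u @ ys, xs @ pos_word v @ ys) \<in> pres_cong Ls R"

definition geom_group :: "'f law set \<Rightarrow> (('f law \<times> addr) list \<times> ('f law \<times> addr) list) set
    \<Rightarrow> 'f letter list set monoid" where
  "geom_group Ls R =
     \<lparr> carrier = words Ls // pres_cong Ls R,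
       mult = (\<lambda>A B. pres_cong Ls R `` {a @ b | a b. a \<in> A \<and> b \<in> B}),
       one = pres_cong Ls R `` {[]} \<rparr>"

text \<open>The map eval : W_L -> G_L (letter O^+ to g, O^- to g^{-1}).\<close>
definition geval :: "'f law set \<Rightarrow> (('f law \<times> addr) list \<times> ('f law \<times> addr) list) set
    \<Rightarrow> 'f letter list \<Rightarrow> 'f letter list set" where
  "geval Ls R w = pres_cong Ls R `` {w}"

definition confluence_relations :: "('f \<Rightarrow> nat) \<Rightarrow> 'f law set
    \<Rightarrow> (('f law \<times> addr) list \<times> ('f law \<times> addr) list) set \<Rightarrow> bool" where
  "confluence_relations ar Ls R =
     (\<forall>(u, v)\<in>R. set u \<subseteq> generators Ls \<and> set v \<subseteq> generators Ls \<and>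
        (\<forall>t\<in>one_var_terms ar. eval_word (pos_word u) t = eval_word (pos_word v) t))"

definition is_blueprint :: "('f \<Rightarrow> nat) \<Rightarrow> 'f law set
    \<Rightarrow> (('f law \<times> addr) list \<times> ('f law \<times> addr) list) set
    \<Rightarrow> ('f letter list set \<Rightarrow> 'f letter list set)
    \<Rightarrow> (('f, unit) trm \<Rightarrow> 'f letter list set) \<Rightarrow> bool" where
  "is_blueprint ar Ls R \<phi> Cc =
     ((\<forall>t\<in>one_var_terms ar. Cc t \<in> carrier (geom_group Ls R)) \<and>
      (\<forall>t\<in>one_var_terms ar. \<forall>w\<in>words Ls. \<forall>t'. eval_word w t = Some t' \<longrightarrow>
          Cc t' = Cc t \<otimes>\<^bsub>geom_group Ls R\<^esub> \<phi> (geval Ls R w)))"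

end

theory Submission
  imports Defs
begin

text \<open>If u is a term with u\<cdot>w = u\<cdot>w' = t, the blueprint property gives
  Cc(t) = Cc(u)\<phi>(eval w) = Cc(u)\<phi>(eval w'). Cancelling Cc(u) in the group G_L yields
  \<phi>(eval w) = \<phi>(eval w'), and injectivity of \<phi> gives eval w = eval w'. The only
  real work is to check that the presentation does define a group.\<close>

lemma confluence_relations_generators:
  "confluence_relations ar Ls R \<Longrightarrow> R \<subseteq> lists (generators Ls) \<times> lists (generators Ls)"
  by (auto simp: confluence_relations_def)

lemma pos_word_in_words: "u \<in> lists (generators Ls) \<Longrightarrow> pos_word u \<in> words Ls"
  by (auto simp: words_def pos_word_def)

lemma append_in_words: "v \<in> words Ls \<Longrightarrow> w \<in> words Ls \<Longrightarrow> v @ w \<in> words Ls"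
  by (auto simp: words_def)

lemma pres_cong_in_words:
  assumes "(v, w) \<in> pres_cong Ls R" "R \<subseteq> lists (generators Ls) \<times> lists (generators Ls)"
  shows "v \<in> words Ls \<and> w \<in> words Ls"
  using assms
proof (induction rule: pres_cong.induct)
  case (rel u v xs ys)
  then show ?case by (auto intro!: append_in_words pos_word_in_words)
qed (auto simp: words_def)

lemma equiv_pres_cong:
  assumes "R \<subseteq> lists (generators Ls) \<times> lists (generators Ls)"
  shows "equiv (words Ls) (pres_cong Ls R)"
  using pres_cong_in_words[OF _ assms]
  by (auto intro!: equivI refl_onI symI transI intro: pres_cong.refl pres_cong.sym pres_cong.trans)

lemma pres_cong_append_left:
  assumes "(v, w) \<in> pres_cong Ls R" "xs \<in> words Ls"
    and "R \<subseteq> lists (generators Ls) \<times> lists (generators Ls)"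
  shows "(xs @ v, xs @ w) \<in> pres_cong Ls R"
  using assms
proof (induction rule: pres_cong.induct)
  case (refl w)
  then show ?case by (simp add: append_in_words pres_cong.refl)
next
  case (cancel xs' ys g b)
  then show ?case using pres_cong.cancel[where xs="xs @ xs'"] by (simp add: append_in_words)
next
  case (rel u v xs' ys)
  then show ?case using pres_cong.rel[where xs="xs @ xs'"] by (simp add: append_in_words)
qed (blast intro: pres_cong.sym pres_cong.trans)+

lemma pres_cong_append_right:
  assumes "(v, w) \<in> pres_cong Ls R" "ys \<in> words Ls"
    and "R \<subseteq> lists (generators Ls) \<times> lists (generators Ls)"
  shows "(v @ ys, w @ ys) \<in> pres_cong Ls R"
  using assms
proof (induction rule: pres_cong.induct)
  case (refl w)
  then show ?case by (simp add: append_in_words pres_cong.refl)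
next
  case (cancel xs ys' g b)
  then show ?case using pres_cong.cancel[where ys="ys' @ ys"] by (simp add: append_in_words)
next
  case (rel u v xs ys')
  then show ?case using pres_cong.rel[where ys="ys' @ ys"] by (simp add: append_in_words)
qed (blast intro: pres_cong.sym pres_cong.trans)+

lemma geom_group_mult_classes:
  assumes "a \<in> words Ls" "b \<in> words Ls"
    and R: "R \<subseteq> lists (generators Ls) \<times> lists (generators Ls)"
  shows "pres_cong Ls R `` {a} \<otimes>\<^bsub>geom_group Ls R\<^esub> pres_cong Ls R `` {b}
       = pres_cong Ls R `` {a @ b}"
proof -
  let ?S = "{x @ y | x y. x \<in> pres_cong Ls R `` {a} \<and> y \<in> pres_cong Ls R `` {b}}"
  have "?S \<subseteq> pres_cong Ls R `` {a @ b}"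
  proof
    fix z assume "z \<in> ?S"
    then obtain x y where z: "z = x @ y" and ax: "(a, x) \<in> pres_cong Ls R"
      and b_y: "(b, y) \<in> pres_cong Ls R" by auto
    have "(a @ b, x @ b) \<in> pres_cong Ls R"
      using pres_cong_append_right[OF ax assms(2) R] .
    moreover have "(x @ b, x @ y) \<in> pres_cong Ls R"
      using pres_cong_append_left[OF b_y _ R] pres_cong_in_words[OF ax R] by blast
    ultimately show "z \<in> pres_cong Ls R `` {a @ b}"
      using z by (blast intro: pres_cong.trans)
  qed
  moreover have "a @ b \<in> ?S"
    using assms by (blast intro: pres_cong.refl)
  ultimately have "pres_cong Ls R `` ?S = pres_cong Ls R `` {a @ b}"
    by (blast intro: pres_cong.trans)
  then show ?thesis by (simp add: geom_group_def)
qed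

definition inverse_word :: "'f letter list \<Rightarrow> 'f letter list" where
  "inverse_word w = rev (map (\<lambda>(b, g). (\<not> b, g)) w)"

lemma inverse_word_in_words: "w \<in> words Ls \<Longrightarrow> inverse_word w \<in> words Ls"
  by (auto simp: words_def inverse_word_def)

lemma pres_cong_inverse_word_cancel:
  assumes "w \<in> words Ls" "a \<in> words Ls"
  shows "(inverse_word w @ w @ a, a) \<in> pres_cong Ls R"
  using assms
proof (induction w)
  case Nil
  then show ?case by (simp add: inverse_word_def pres_cong.refl)
next
  case (Cons x w)
  obtain b g where x: "x = (b, g)" by (cases x)
  have w: "w \<in> words Ls" and g: "g \<in> generators Ls"
    using Cons.prems x by (auto simp: words_def)
  have "(inverse_word w @ [(\<not> b, g), (\<not> \<not> b, g)] @ w @ a, inverse_word w @ w @ a)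
      \<in> pres_cong Ls R"
    using pres_cong.cancel[OF inverse_word_in_words[OF w] append_in_words[OF w Cons.prems(2)] g] .
  moreover have "inverse_word (x # w) @ (x # w) @ a
      = inverse_word w @ [(\<not> b, g), (\<not> \<not> b, g)] @ w @ a"
    by (simp add: inverse_word_def x)
  ultimately show ?case
    using Cons.IH[OF w Cons.prems(2)] by (metis pres_cong.trans)
qed

lemma group_geom_group:
  assumes R: "R \<subseteq> lists (generators Ls) \<times> lists (generators Ls)"
  shows "group (geom_group Ls R)"
proof (rule groupI)
  let ?G = "geom_group Ls R" and ?cls = "\<lambda>a. pres_cong Ls R `` {a}"
  have carrier: "carrier ?G = words Ls // pres_cong Ls R" and one: "\<one>\<^bsub>?G\<^esub> = ?cls []"
    by (simp_all add: geom_group_def)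
  have mult: "?cls a \<otimes>\<^bsub>?G\<^esub> ?cls b = ?cls (a @ b)" if "a \<in> words Ls" "b \<in> words Ls" for a b
    using geom_group_mult_classes[OF that R] .
  show "x \<otimes>\<^bsub>?G\<^esub> y \<in> carrier ?G" if "x \<in> carrier ?G" "y \<in> carrier ?G" for x y
    using that by (auto simp: carrier mult elim!: quotientE intro!: quotientI append_in_words)
  show "\<one>\<^bsub>?G\<^esub> \<in> carrier ?G"
    by (simp add: carrier one quotientI words_def)
  show "x \<otimes>\<^bsub>?G\<^esub> y \<otimes>\<^bsub>?G\<^esub> z = x \<otimes>\<^bsub>?G\<^esub> (y \<otimes>\<^bsub>?G\<^esub> z)"
    if "x \<in> carrier ?G" "y \<in> carrier ?G" "z \<in> carrier ?G" for x y z
    using that by (auto simp: carrier mult append_in_words elim!: quotientE)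
  show "\<one>\<^bsub>?G\<^esub> \<otimes>\<^bsub>?G\<^esub> x = x" if "x \<in> carrier ?G" for x
    using that by (auto simp: carrier one mult words_def elim!: quotientE)
  show "\<exists>y\<in>carrier ?G. y \<otimes>\<^bsub>?G\<^esub> x = \<one>\<^bsub>?G\<^esub>" if "x \<in> carrier ?G" for x
  proof -
    from that obtain a where a: "a \<in> words Ls" "x = ?cls a"
      by (auto simp: carrier elim!: quotientE)
    have "(inverse_word a @ a, []) \<in> pres_cong Ls R"
      using pres_cong_inverse_word_cancel[OF a(1), of "[]"] by (simp add: words_def)
    then have "?cls (inverse_word a @ a) = ?cls []"
      using equiv_pres_cong[OF R] by (simp add: equiv_class_eq_iff)
    then show ?thesis
      using a inverse_word_in_words[OF a(1)]
      by (auto simp: carrier one mult intro!: bexI[of _ "?cls (inverse_word a)"] quotientI)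
  qed
qed

lemma geval_in_carrier: "w \<in> words Ls \<Longrightarrow> geval Ls R w \<in> carrier (geom_group Ls R)"
  by (simp add: geval_def geom_group_def quotientI)

theorem proposition4p8:
  fixes ar :: "'f \<Rightarrow> nat"
    and Ls :: "'f law set"
    and R :: "(('f law \<times> addr) list \<times> ('f law \<times> addr) list) set"
    and \<phi> :: "'f letter list set \<Rightarrow> 'f letter list set"
    and Cc :: "('f, unit) trm \<Rightarrow> 'f letter list set"
  assumes laws: "\<forall>L\<in>Ls. balanced_law ar L"
    and conf: "confluence_relations ar Ls R"
    and hom: "\<phi> \<in> hom (geom_group Ls R) (geom_group Ls R)"
    and inj: "inj_on \<phi> (carrier (geom_group Ls R))"
    and bp: "is_blueprint ar Ls R \<phi> Cc"
    and w: "w \<in> words Ls" and w': "w' \<in> words Ls"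
    and sim: "pm_sim ar (eval_word w) (eval_word w')"
  shows "geval Ls R w = geval Ls R w'"
proof -
  let ?G = "geom_group Ls R"
  interpret G: group ?G
    using group_geom_group[OF confluence_relations_generators[OF conf]] .
  from sim obtain u t where u: "u \<in> one_var_terms ar"
    and wt: "eval_word w u = Some t" and w't: "eval_word w' u = Some t"
    by (auto simp: pm_sim_def)
  have "Cc t = Cc u \<otimes>\<^bsub>?G\<^esub> \<phi> (geval Ls R w)"
    using bp u w wt by (simp add: is_blueprint_def)
  moreover have "Cc t = Cc u \<otimes>\<^bsub>?G\<^esub> \<phi> (geval Ls R w')"
    using bp u w' w't by (simp add: is_blueprint_def)
  moreover have "Cc u \<in> carrier ?G"
    using bp u by (simp add: is_blueprint_def)
  moreover have "\<phi> (geval Ls R v) \<in> carrier ?G" if "v \<in> words Ls" for v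
    using hom geval_in_carrier[OF that] by (rule hom_in_carrier)
  ultimately have "\<phi> (geval Ls R w) = \<phi> (geval Ls R w')"
    using w w' by simp
  with inj show ?thesis
    by (rule inj_onD) (use w w' geval_in_carrier in blast)+
qed

end
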